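(* For $0\le z<1$ define $$P_{\chi^2(1)}(z)=\frac{1}{\pi}\cos^{-1}(z),\qquad P_{\chi^2(2)}(z)=\frac{1}{2}-\frac{2}{\pi^2}\int_0^{\pi/2}\tan^{-1}\!\left(\frac{z}{2-2z}\tan t\right)dt,$$ and set $P_{\chi^2(2)}(1)=0$ (its limit as $z\to1$). Then $P_{\chi^2(2)}(z)\le P_{\chi^2(1)}(z)$ for all $z\in[0,1]$.
   Context: $\cos^{-1}$ is the principal arccosine with values in $[0,\pi]$; $\tan^{-1}$ is the principal arctangent. *)

theory Defs
  imports "HOL-Analysis.Analysis"
begin

definition P_chi1 :: "real \<Rightarrow> real" where
  "P_chi1 z = (1 / pi) * arccos z"

definition P_chi2 :: "real \<Rightarrow> real" where
  "P_chi2 z = (if z = 1 then 0 else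
     1/2 - (2 / pi^2) * integral {0..pi/2} (\<lambda>t. arctan (z / (2 - 2*z) * tan t)))"

end

theory Submission
  imports Defs
begin

(* Substituting  a = z/(2-2z)  (so z = 2a/(1+2a), and a ranges over (0,\<infinity>) as z ranges
   over (0,1)), the claim  P_chi2 z \<le> P_chi1 z  becomes, with
       J(a) = \<integral>_0^(pi/2) arctan(a tan t) dt   (atan_integral),
   the inequality  pi/2 \<cdot> arcsin(2a/(1+2a)) \<le> J(a)  for all a > 0; the end points z = 0, 1
   are immediate. *)

text \<open>Polynomial bounds for arctan on the nonnegative axis, valid without the
  restriction x < 1 of the library's alternating-series bounds.\<close>

lemma arctan_lower_cubic:
  fixes x :: real assumes "0 \<le> x" shows "x - x^3/3 \<le> arctan x"
proof -
  let ?h = "\<lambda>y::real. arctan y - y + y^3/3"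
  have "?h 0 \<le> ?h x"
  proof (rule DERIV_nonneg_imp_nondecreasing[OF assms])
    fix y :: real
    have pos: "1 + y^2 \<noteq> 0" by (smt (verit) zero_le_power2)
    have "(?h has_real_derivative (y^4/(1+y^2))) (at y)"
      by (rule derivative_eq_intros refl | simp)+
         (use pos in \<open>simp add: field_simps power2_eq_square power4_eq_xxxx\<close>)
    thus "\<exists>d. (?h has_real_derivative d) (at y) \<and> 0 \<le> d" by force
  qed
  thus ?thesis by simp
qed

lemma arctan_upper_quintic:
  fixes x :: real assumes "0 \<le> x" shows "arctan x \<le> x - x^3/3 + x^5/5"
proof -
  let ?h = "\<lambda>y::real. y - y^3/3 + y^5/5 - arctan y"
  have "?h 0 \<le> ?h x"
  proof (rule DERIV_nonneg_imp_nondecreasing[OF assms])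
    fix y :: real
    have pos: "1 + y^2 \<noteq> 0" by (smt (verit) zero_le_power2)
    have "(?h has_real_derivative (y^6/(1+y^2))) (at y)"
      by (rule derivative_eq_intros refl | simp)+
         (use pos in \<open>simp add: field_simps eval_nat_numeral\<close>)
    thus "\<exists>d. (?h has_real_derivative d) (at y) \<and> 0 \<le> d" by force
  qed
  thus ?thesis by simp
qed

text \<open>Partial sums of the series  atanh q = \<Sum> q^(2k+1)/(2k+1); they give two-sided
  bounds for  ln((1+q)/(1-q)) = 2 atanh q  with an explicit tail estimate.\<close>

definition odd_power_sum :: "nat \<Rightarrow> real \<Rightarrow> real" where
  "odd_power_sum n q = (\<Sum>k<n. q^(2*k+1)/(2*k+1))"

lemma odd_power_sum_deriv:
  "(odd_power_sum n has_real_derivative (\<Sum>k<n. (x^2)^k)) (at x)"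
  unfolding odd_power_sum_def
proof (rule DERIV_sum)
  fix k
  have "((\<lambda>q. q^(2*k+1)) has_real_derivative real (2*k+1) * x^(2*k)) (at x)"
    using DERIV_pow[of "2*k+1" x] by simp
  hence "((\<lambda>q. q^(2*k+1)/(2*k+1)) has_real_derivative real (2*k+1) * x^(2*k)/(2*k+1)) (at x)"
    by (rule DERIV_cdivide)
  thus "((\<lambda>q. q^(2*k+1)/(2*k+1)) has_real_derivative (x^2)^k) (at x)"
    by (simp add: power_mult)
qed

lemma geometric_sum_squares:
  fixes x :: real assumes "x^2 < 1"
  shows "(\<Sum>k<n. (x^2)^k) = (1 - (x^2)^n) / (1 - x^2)"
  using one_diff_power_eq[of "x^2" n] assms by (simp add: field_simps)

text \<open>The partial sums undershoot  2 atanh q: the difference has derivative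
  2 x^(2n)/(1 - x^2) \<ge> 0.\<close>

lemma atanh_lower:
  fixes q :: real assumes q: "0 \<le> q" "q < 1"
  shows "2 * odd_power_sum n q \<le> ln (1+q) - ln (1-q)"
proof -
  let ?h = "\<lambda>q. ln (1+q) - ln (1-q) - 2 * odd_power_sum n q"
  have "?h 0 \<le> ?h q"
  proof (rule DERIV_nonneg_imp_nondecreasing[OF q(1)])
    fix x :: real assume x: "0 \<le> x" "x \<le> q"
    have p: "0 < 1 - x^2" using x q by (simp add: abs_square_less_1)
    have "(?h has_real_derivative (1/(1+x) + 1/(1-x) - 2 * (\<Sum>k<n. (x^2)^k))) (at x)"
      using x q by (auto intro!: derivative_eq_intros odd_power_sum_deriv)
    moreover have "1/(1+x) + 1/(1-x) = 2 / (1 - x^2)"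
      using x q by (simp add: field_simps power2_eq_square)
    moreover have "2 / m - 2 * ((1 - P) / m) = 2 * P / m" for m P :: real
      by (simp add: diff_divide_distrib[symmetric] algebra_simps)
    ultimately show "\<exists>d. (?h has_real_derivative d) (at x) \<and> 0 \<le> d"
      using p by (force simp: geometric_sum_squares)
  qed
  thus ?thesis by (simp add: odd_power_sum_def)
qed

text \<open>The tail of the series is at most the geometric bound  q^(2n+1)/((2n+1)(1 - q^2)); the
  difference has derivative  4 x^(2n+2)/((2n+1)(1 - x^2)^2) \<ge> 0.\<close>

lemma atanh_upper:
  fixes q :: real assumes q: "0 \<le> q" "q < 1"
  shows "ln (1+q) - ln (1-q) \<le> 2 * odd_power_sum n q + 2 * q^(2*n+1) / (real (2*n+1) * (1 - q^2))"
proof -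
  define c where "c = real (2*n+1)"
  have c: "0 < c" by (simp add: c_def)
  let ?h = "\<lambda>q. 2 * odd_power_sum n q + 2 * (q^(2*n+1) / (c * (1 - q^2))) - (ln (1+q) - ln (1-q))"
  have "?h 0 \<le> ?h q"
  proof (rule DERIV_nonneg_imp_nondecreasing[OF q(1)])
    fix x :: real assume x: "0 \<le> x" "x \<le> q"
    have p: "0 < 1 - x^2" using x q by (simp add: abs_square_less_1)
    have p': "x^2 < 1" using p by simp
    define P where "P = (x^2)^n"
    have d1: "((\<lambda>q. q^(2*n+1)) has_real_derivative c * P) (at x)"
      using DERIV_pow[of "2*n+1" x] by (simp add: c_def P_def power_mult)
    have d2: "((\<lambda>q. c * (1 - q^2)) has_real_derivative c * (- (2*x))) (at x)"
      by (auto intro!: derivative_eq_intros)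
    have d3: "((\<lambda>q. q^(2*n+1) / (c * (1 - q^2))) has_real_derivative
        ((c * P) * (c * (1 - x^2)) - x^(2*n+1) * (c * (- (2*x)))) / ((c * (1 - x^2)) * (c * (1 - x^2)))) (at x)"
      using c p by (intro DERIV_divide[OF d1 d2]) simp
    have dl: "((\<lambda>q. ln (1+q) - ln (1-q)) has_real_derivative 2 / (1 - x^2)) (at x)"
      using x q by (auto intro!: derivative_eq_intros simp: field_simps power2_eq_square)
    define D where "D = 2 * (\<Sum>k<n. (x^2)^k) + 2 * (((c * P) * (c * (1 - x^2)) - x^(2*n+1) * (c * (- (2*x))))
      / ((c * (1 - x^2)) * (c * (1 - x^2)))) - 2 / (1 - x^2)"
    have "(?h has_real_derivative D) (at x)"
      unfolding D_def by (intro DERIV_diff DERIV_add DERIV_cmult odd_power_sum_deriv d3 dl)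
    moreover have "D = 4 * P * x^2 / (c * (1 - x^2)^2)"
    proof -
      have alg: "2 * ((1 - P) / m) + 2 * (((c * P) * (c * m) - (x * P) * (c * (- (2*x)))) / ((c * m) * (c * m)))
          - 2 / m = 4 * P * x^2 / (c * m^2)" if "m \<noteq> 0" for m
        using c that by (simp add: field_simps power2_eq_square)
      have xP: "x^(2*n+1) = x * P" by (simp add: P_def power_mult)
      show ?thesis unfolding D_def geometric_sum_squares[OF p'] P_def[symmetric] xP
        using p by (intro alg) simp
    qed
    ultimately show "\<exists>d. (?h has_real_derivative d) (at x) \<and> 0 \<le> d"
      using p c by (force simp: P_def)
  qed
  thus ?thesis by (simp add: odd_power_sum_def c_def)
qed

definition ln_lo :: "real \<Rightarrow> real" where
  "ln_lo y = 2 * odd_power_sum 4 ((y-1)/(y+1))"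

definition ln_up :: "real \<Rightarrow> real" where
  "ln_up y = ln_lo y + 2 * ((y-1)/(y+1))^9 / (9 * (1 - ((y-1)/(y+1))^2))"

lemma ln_lo_ln_up:
  fixes y :: real assumes "1 \<le> y"
  shows "ln_lo y \<le> ln y" and "ln y \<le> ln_up y"
proof -
  define q where "q = (y-1)/(y+1)"
  have q: "0 \<le> q" "q < 1" using assms by (auto simp: q_def field_simps)
  have "ln (1+q) - ln (1-q) = ln ((1+q)/(1-q))" using q by (simp add: ln_div)
  also have "(1+q)/(1-q) = y" using assms by (simp add: q_def field_simps)
  finally have ln_y: "ln (1+q) - ln (1-q) = ln y" .
  show "ln_lo y \<le> ln y" using atanh_lower[OF q, of 4] ln_y by (simp add: ln_lo_def q_def)
  show "ln y \<le> ln_up y" using atanh_upper[OF q, of 4] ln_y by (simp add: ln_up_def ln_lo_def q_def)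
qed

definition atan_integral :: "real \<Rightarrow> real" where
  "atan_integral a = integral {0..pi/2} (\<lambda>t. arctan (a * tan t))"

lemma cubic_minorant_primitive:
  fixes a t :: real assumes "0 < cos t"
  shows "((\<lambda>t. -(a + a^3/3) * ln (cos t) - a^3 * (tan t)^2 / 6)
           has_real_derivative (a * tan t - (a * tan t)^3/3)) (at t)"
proof -
  have s2: "sin t ^ 2 = 1 - cos t ^ 2" by (simp add: sin_squared_eq)
  have s3: "sin t ^ 3 = sin t * (1 - cos t ^ 2)"
    by (metis s2 power3_eq_cube power2_eq_square mult.assoc mult.commute)
  show ?thesis
    apply (rule derivative_eq_intros refl | use assms in force)+
    using assms by (simp add: tan_def field_simps s2 s3) algebra
qed

lemma arctan_one_over: "0 < x \<Longrightarrow> arctan (1/x) = pi/2 - arctan x"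
  using arctan_inverse[of x] by (simp add: inverse_eq_divide)

lemma head_minorant_integral:
  fixes a :: real assumes a: "0 < a"
  shows "((\<lambda>t. a * tan t - (a * tan t)^3/3) has_integral
           ((a/2 + a^3/6) * ln (1 + 1/a^2) - a/6)) {0..arctan (1/a)}"
proof -
  define t0 where "t0 = arctan (1/a)"
  define F where "F t = -(a + a^3/3) * ln (cos t) - a^3 * (tan t)^2 / 6" for t
  have t0: "0 < t0" "t0 < pi/2" using a arctan_ubound by (auto simp: t0_def)
  have "((\<lambda>t. a * tan t - (a * tan t)^3/3) has_integral (F t0 - F 0)) {0..t0}"
    using t0 cubic_minorant_primitive unfolding F_def
    by (intro fundamental_theorem_of_calculus)
       (auto simp: has_real_derivative_iff_has_vector_derivative[symmetric] cos_gt_zero_pi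
             intro: has_field_derivative_at_within)
  moreover have "F t0 - F 0 = (a/2 + a^3/6) * ln (1 + 1/a^2) - a/6"
  proof -
    have "cos t0 = 1 / sqrt (1 + (1/a)^2)" by (simp add: t0_def cos_arctan)
    hence ln_cos: "ln (cos t0) = - ln (1 + 1/a^2) / 2"
      by (simp add: ln_div ln_sqrt power_one_over add_pos_nonneg)
    have tan: "tan t0 = 1/a" by (simp add: t0_def tan_arctan)
    show ?thesis using a unfolding F_def ln_cos tan
      by (simp add: field_simps power2_eq_square power3_eq_cube)
  qed
  ultimately show ?thesis by (simp add: t0_def)
qed

lemma tail_minorant_integral:
  fixes a :: real assumes a: "0 < a"
  shows "((\<lambda>t. pi/2 - cos t / (a * sin t)) has_integral
           (pi/2 * arctan a - ln (1 + 1/a^2) / (2*a) - ln a / a)) {arctan (1/a)..pi/2}"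
proof -
  define t0 where "t0 = arctan (1/a)"
  define F where "F t = pi/2 * t - ln (sin t) / a" for t
  have t0: "0 < t0" "t0 < pi/2" using a arctan_ubound by (auto simp: t0_def)
  have "((\<lambda>t. pi/2 - cos t / (a * sin t)) has_integral (F (pi/2) - F t0)) {t0..pi/2}"
    using t0 a unfolding F_def
    by (intro fundamental_theorem_of_calculus)
       (auto simp: has_real_derivative_iff_has_vector_derivative[symmetric] field_simps
             intro!: derivative_eq_intros sin_gt_zero)
  moreover have "F (pi/2) - F t0 = pi/2 * arctan a - ln (1 + 1/a^2) / (2*a) - ln a / a"
  proof -
    have "sin t0 = 1 / (a * sqrt (1 + 1/a^2))"
      using sin_arctan[of "1/a"] by (simp add: t0_def power_one_over)
    moreover have "0 < 1 + 1/a^2" by (simp add: add_pos_nonneg)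
    ultimately have ln_sin: "ln (sin t0) = - ln a - ln (1 + 1/a^2) / 2"
      using a by (simp add: ln_div ln_mult ln_sqrt)
    have t0_eq: "t0 = pi/2 - arctan a" using arctan_one_over[OF a] by (simp add: t0_def)
    show ?thesis using a unfolding F_def ln_sin by (simp add: t0_eq field_simps)
  qed
  ultimately show ?thesis by (simp add: t0_def)
qed

text \<open>On the head  [0, arctan(1/a)]  the integrand dominates the cubic minorant.\<close>

lemma atan_integral_head:
  fixes a :: real assumes a: "0 < a"
  shows "(\<lambda>t. arctan (a * tan t)) integrable_on {0..arctan (1/a)}"
    and "(a/2 + a^3/6) * ln (1 + 1/a^2) - a/6 \<le> integral {0..arctan (1/a)} (\<lambda>t. arctan (a * tan t))"
proof -
  define t0 where "t0 = arctan (1/a)"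
  have t0: "0 < t0" "t0 < pi/2" using a arctan_ubound by (auto simp: t0_def)
  have cos_pos: "0 < cos t" if "t \<in> {0..t0}" for t
    using that t0 by (intro cos_gt_zero_pi) auto
  have "continuous_on {0..t0} (\<lambda>t. arctan (a * tan t))"
    using cos_pos by (intro continuous_intros) (auto simp: less_imp_neq[symmetric])
  from integrable_continuous_interval[OF this]
  show int: "(\<lambda>t. arctan (a * tan t)) integrable_on {0..arctan (1/a)}" by (simp add: t0_def)
  have "a * tan t - (a * tan t)^3/3 \<le> arctan (a * tan t)" if "t \<in> {0..t0}" for t
  proof -
    have "0 \<le> tan t"
      using that t0 cos_pos[OF that] by (auto simp: tan_def intro!: divide_nonneg_pos sin_ge_zero)
    thus ?thesis using a by (intro arctan_lower_cubic) simp
  qed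
  with head_minorant_integral[OF a] show "(a/2 + a^3/6) * ln (1 + 1/a^2) - a/6
      \<le> integral {0..arctan (1/a)} (\<lambda>t. arctan (a * tan t))"
    using has_integral_le[OF _ integrable_integral[OF int]] by (fastforce simp: t0_def)
qed

text \<open>On the tail  [arctan(1/a), pi/2], away from  pi/2, the integrand equals
  pi/2 - arctan(cot t / a), which is continuous up to  pi/2  and dominates  pi/2 - cot t / a;
  changing the integrand at the single point  pi/2  does not affect the integral.\<close>

lemma atan_integral_tail:
  fixes a :: real assumes a: "0 < a"
  shows "(\<lambda>t. arctan (a * tan t)) integrable_on {arctan (1/a)..pi/2}"
    and "pi/2 * arctan a - ln (1 + 1/a^2) / (2*a) - ln a / a
           \<le> integral {arctan (1/a)..pi/2} (\<lambda>t. arctan (a * tan t))"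
proof -
  define t0 where "t0 = arctan (1/a)"
  have t0: "0 < t0" "t0 < pi/2" using a arctan_ubound by (auto simp: t0_def)
  have sin_pos: "0 < sin t" if "t \<in> {t0..pi/2}" for t
    using that t0 by (intro sin_gt_zero) auto
  define g where "g t = pi/2 - arctan (cos t / (a * sin t))" for t
  have g_int: "g integrable_on {t0..pi/2}"
    unfolding g_def using sin_pos a
    by (intro integrable_continuous_interval continuous_intros) (auto simp: less_imp_neq[symmetric])
  have g_eq: "g t = arctan (a * tan t)" if "t \<in> {t0..pi/2} - {pi/2}" for t
  proof -
    have t: "0 < t" "t < pi/2" using that t0 by auto
    have "0 < a * tan t" using a tan_gt_zero[OF t] by simp
    from arctan_one_over[OF this] show ?thesis by (simp add: g_def tan_def)
  qed
  have int: "(\<lambda>t. arctan (a * tan t)) integrable_on {t0..pi/2}"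
    by (rule integrable_spike[OF g_int negligible_sing[of "pi/2"]]) (use g_eq in force)
  then show "(\<lambda>t. arctan (a * tan t)) integrable_on {arctan (1/a)..pi/2}" by (simp add: t0_def)
  have same: "integral {t0..pi/2} (\<lambda>t. arctan (a * tan t)) = integral {t0..pi/2} g"
    by (rule integral_spike[OF negligible_sing[of "pi/2"]]) (use g_eq in force)
  have "pi/2 - cos t / (a * sin t) \<le> g t" if t: "t \<in> {t0..pi/2}" for t
  proof -
    have "0 \<le> cos t" using t t0 by (intro cos_ge_zero) auto
    hence "0 \<le> cos t / (a * sin t)" using sin_pos[OF t] a by simp
    thus ?thesis unfolding g_def using arctan_le_self by smt
  qed
  with tail_minorant_integral[OF a] show "pi/2 * arctan a - ln (1 + 1/a^2) / (2*a) - ln a / a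
      \<le> integral {arctan (1/a)..pi/2} (\<lambda>t. arctan (a * tan t))"
    using has_integral_le[OF _ integrable_integral[OF g_int]] same by (fastforce simp: t0_def)
qed

lemma atan_integrable:
  fixes a :: real assumes "0 < a"
  shows "(\<lambda>t. arctan (a * tan t)) integrable_on {0..pi/2}"
  using Henstock_Kurzweil_Integration.integrable_combine[OF _ _ atan_integral_head(1) atan_integral_tail(1)] assms
    arctan_ubound[of "1/a"] by (simp add: less_imp_le)

text \<open>The closed-form lower bound for the integral obtained from the two pieces.\<close>

definition log_coeff :: "real \<Rightarrow> real" where
  "log_coeff a = a/2 + a^3/6 - 1/(2*a)"

definition integral_lower :: "real \<Rightarrow> real" where
  "integral_lower a = pi/2 * arctan a + log_coeff a * ln (1 + 1/a^2) - ln a / a - a/6"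

lemma integral_lower_le:
  fixes a :: real assumes a: "0 < a"
  shows "integral_lower a \<le> atan_integral a"
proof -
  have "atan_integral a = integral {0..arctan (1/a)} (\<lambda>t. arctan (a * tan t))
          + integral {arctan (1/a)..pi/2} (\<lambda>t. arctan (a * tan t))"
    unfolding atan_integral_def using Henstock_Kurzweil_Integration.integral_combine[OF _ _ atan_integrable[OF a]]
      arctan_ubound[of "1/a"] a by (simp add: less_imp_le)
  thus ?thesis using atan_integral_head(2)[OF a] atan_integral_tail(2)[OF a]
    unfolding integral_lower_def log_coeff_def by (simp add: algebra_simps)
qed

lemma atan_integral_mono:
  fixes a b :: real assumes "0 < a" "a \<le> b"
  shows "atan_integral a \<le> atan_integral b"
  unfolding atan_integral_def
proof (rule integral_le)
  show "(\<lambda>t. arctan (a * tan t)) integrable_on {0..pi/2}"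
       "(\<lambda>t. arctan (b * tan t)) integrable_on {0..pi/2}"
    using assms by (simp_all add: atan_integrable)
  fix t assume "t \<in> {0..pi/2}"
  hence "0 \<le> tan t" by (auto simp: tan_def intro!: divide_nonneg_nonneg sin_ge_zero cos_ge_zero)
  hence "a * tan t \<le> b * tan t" using assms by (simp add: mult_right_mono)
  thus "arctan (a * tan t) \<le> arctan (b * tan t)" by (simp add: arctan_le_iff)
qed

lemma arctan_diff:
  fixes a u :: real assumes "0 < a" "0 < u"
  shows "arctan a - arctan u = arctan ((a - u) / (1 + a*u))"
proof -
  have "\<bar>arctan a + arctan (-u)\<bar> < pi/2"
  proof -
    have "0 < arctan a" "0 < arctan u" using assms by simp_all
    thus ?thesis unfolding arctan_minus abs_less_iff using arctan_ubound[of a] arctan_ubound[of u]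
      by linarith
  qed
  from arctan_add_raw[OF this] show ?thesis by (simp add: arctan_minus)
qed

text \<open>A rational lower bound for  pi/2 \<cdot> arctan d, using the library's rational enclosure
  of  pi  and the polynomial bounds for arctan.\<close>

definition atan_lo :: "real \<Rightarrow> real" where
  "atan_lo d = (if 0 \<le> d then 3.141592653588/2 * (d - d^3/3)
                else - (3.1415926535899/2 * ((-d) - (-d)^3/3 + (-d)^5/5)))"

lemma atan_lo_le: "atan_lo d \<le> pi/2 * arctan d"
proof (cases "0 \<le> d")
  case True
  have "3.141592653588/2 * (d - d^3/3) \<le> 3.141592653588/2 * arctan d"
    using arctan_lower_cubic[OF True] by simp
  also have "\<dots> \<le> pi/2 * arctan d"
    using pi_approx(1) True by (intro mult_right_mono) simp_all
  finally show ?thesis using True by (simp add: atan_lo_def)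
next
  case False
  hence e: "0 \<le> -d" by simp
  have "pi/2 * arctan (-d) \<le> pi/2 * ((-d) - (-d)^3/3 + (-d)^5/5)"
    using arctan_upper_quintic[OF e] by simp
  also have "\<dots> \<le> 3.1415926535899/2 * ((-d) - (-d)^3/3 + (-d)^5/5)"
  proof (rule mult_right_mono)
    show "0 \<le> (-d) - (-d)^3/3 + (-d)^5/5"
      using arctan_upper_quintic[OF e] e by (smt (verit) arctan_zero_zero arctan_monotone')
  qed (use pi_approx(2) in simp)
  finally have "- (3.1415926535899/2 * ((-d) - (-d)^3/3 + (-d)^5/5)) \<le> pi/2 * arctan d"
    unfolding arctan_minus by linarith
  thus ?thesis using False by (simp add: atan_lo_def)
qed

lemma ln_one_plus_inverse_square:
  fixes a :: real assumes "0 < a"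
  shows "ln (1 + 1/a^2) = ln (1 + a^2) - 2 * ln a"
proof -
  have "1 + 1/a^2 = (1 + a^2) / a^2" using assms by (simp add: field_simps)
  moreover have "0 < 1 + a^2" by (simp add: add_pos_nonneg)
  ultimately show ?thesis using assms by (simp add: ln_div ln_realpow)
qed

lemma log_coeff_nonneg:
  fixes a :: real assumes "1 \<le> a" shows "0 \<le> log_coeff a"
proof -
  have "1/(2*a) \<le> a/2" using assms by (simp add: field_simps) (smt (verit) mult_le_cancel_left1)
  moreover have "0 \<le> a^3/6" using assms by simp
  ultimately show ?thesis unfolding log_coeff_def by linarith
qed

text \<open>Depending on the signs of  c  and  ln a, each
  logarithm is replaced by whichever of its series bounds points in the right direction.\<close>

definition log_lo :: "real \<Rightarrow> real" where
  "log_lo a = (if log_coeff a \<le> 0 \<and> a \<le> 1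
                 then log_coeff a * ln_up (1 + a^2) + (a + a^3/3) * ln_lo (1/a)
               else if a \<le> 1 then log_coeff a * ln_lo (1 + 1/a^2) + ln_lo (1/a) / a
               else log_coeff a * ln_lo (1 + 1/a^2) - ln_up a / a)"

lemma log_lo_le:
  fixes a :: real assumes a: "0 < a"
  shows "log_lo a \<le> log_coeff a * ln (1 + 1/a^2) - ln a / a"
proof -
  let ?c = "log_coeff a"
  have ln_lo_inv: "ln_lo (1/a) \<le> - ln a" if "a \<le> 1"
    using ln_lo_ln_up(1)[of "1/a"] that a by (simp add: ln_div)
  have ln_lo_sq: "ln_lo (1 + 1/a^2) \<le> ln (1 + 1/a^2)" by (rule ln_lo_ln_up(1)) simp
  consider "?c \<le> 0" "a \<le> 1" | "\<not> ?c \<le> 0" "a \<le> 1" | "1 < a" by linarith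
  then show ?thesis
  proof cases
    case 1
    have "?c * ln_up (1 + a^2) \<le> ?c * ln (1 + a^2)"
      using 1 ln_lo_ln_up(2)[of "1 + a^2"] by (simp add: mult_left_mono_neg)
    moreover have "(a + a^3/3) * ln_lo (1/a) \<le> (a + a^3/3) * (- ln a)"
      using ln_lo_inv 1 a by (intro mult_left_mono) auto
    moreover have "?c * ln (1 + 1/a^2) - ln a / a = ?c * ln (1 + a^2) + (a + a^3/3) * (- ln a)"
      unfolding ln_one_plus_inverse_square[OF a] log_coeff_def using a
      by (simp add: field_simps power3_eq_cube)
    ultimately show ?thesis using 1 by (simp add: log_lo_def)
  next
    case 2
    have "?c * ln_lo (1 + 1/a^2) \<le> ?c * ln (1 + 1/a^2)"
      using 2 ln_lo_sq by (simp add: mult_left_mono)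
    moreover have "ln_lo (1/a) / a \<le> - ln a / a"
      using ln_lo_inv[OF 2(2)] a by (intro divide_right_mono) auto
    moreover have "log_lo a = ?c * ln_lo (1 + 1/a^2) + ln_lo (1/a) / a"
      using 2 by (simp add: log_lo_def)
    ultimately show ?thesis by linarith
  next
    case 3
    have "?c * ln_lo (1 + 1/a^2) \<le> ?c * ln (1 + 1/a^2)"
      using 3 ln_lo_sq log_coeff_nonneg[of a] by (simp add: mult_left_mono)
    moreover have "ln a / a \<le> ln_up a / a"
      using ln_lo_ln_up(2)[of a] 3 a by (simp add: divide_right_mono)
    moreover have "log_lo a = ?c * ln_lo (1 + 1/a^2) - ln_up a / a"
      using 3 by (simp add: log_lo_def)
    ultimately show ?thesis by linarith
  qed
qed

text \<open>With  u = 2a'/s'  and  d = (a - u)/(1 + a u)  we have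
  arctan a - arctan u = arctan d, so  integral_lower a - pi/2 \<cdot> arctan u  splits into
  pi/2 \<cdot> arctan d  plus the logarithmic part plus  -a/6; each is bounded below rationally.\<close>

definition cert :: "real \<Rightarrow> real \<Rightarrow> real \<Rightarrow> real" where
  "cert a a' s' = (let u = 2*a'/s' in atan_lo ((a - u) / (1 + a*u)) + log_lo a - a/6)"

lemma cert_sound:
  fixes a a' s' :: real
  assumes a: "0 < a" and u: "0 < 2*a'/s'" and cert: "0 \<le> cert a a' s'"
  shows "pi/2 * arctan (2*a'/s') \<le> integral_lower a"
proof -
  define u where "u = 2*a'/s'"
  define d where "d = (a - u) / (1 + a*u)"
  have "integral_lower a - pi/2 * arctan u
          = pi/2 * arctan d + (log_coeff a * ln (1 + 1/a^2) - ln a / a) - a/6"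
    unfolding integral_lower_def d_def using arctan_diff[OF a u[folded u_def]]
    by (simp add: algebra_simps)
  moreover have "cert a a' s' = atan_lo d + log_lo a - a/6"
    by (simp add: cert_def Let_def u_def d_def)
  ultimately show ?thesis using cert atan_lo_le[of d] log_lo_le[OF a] by (simp add: u_def)
qed

lemma arcsin_eq_arctan:
  fixes a s :: real assumes a: "0 < a" and s: "0 < s" "s^2 = 1 + 4*a"
  shows "arcsin (2*a/(1+2*a)) = arctan (2*a/s)"
proof -
  have p: "0 < 1 + 2*a" using a by simp
  have "1 - (2*a/(1+2*a))^2 = ((1+2*a)^2 - (2*a)^2) / (1+2*a)^2"
    using p by (simp add: power_divide field_simps)
  also have "\<dots> = (s/(1+2*a))^2" using s by (simp add: power_divide power2_eq_square algebra_simps)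
  finally have "sqrt (1 - (2*a/(1+2*a))^2) = s/(1+2*a)" using s p by simp
  moreover have "-1 < 2*a/(1+2*a)" "2*a/(1+2*a) < 1" using a p by (simp_all add: field_simps)
  ultimately show ?thesis using arcsin_arctan p by (simp add: field_simps)
qed

text \<open>Grid points are parametrised by  s > 1, with  a = (s^2-1)/4, so that  \<surd>(1+4a) = s  is
  rational and the certificate is an exactly computable rational number.\<close>

definition grid_point :: "real \<Rightarrow> real" where
  "grid_point s = (s^2 - 1) / 4"

definition grid_step :: "real \<Rightarrow> real \<Rightarrow> bool" where
  "grid_step s s' \<longleftrightarrow> 1 < s \<and> 0 < s' \<and> 0 \<le> cert (grid_point s) (grid_point s') s'"

text \<open>One grid cell: both sides of the inequality are increasing in  a, so it suffices to compare
  the left side at the right end point with the lower bound for the integral at the left one.\<close>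

lemma grid_step_sound:
  fixes a s s' :: real
  assumes step: "grid_step s s'" and a: "grid_point s \<le> a" "a \<le> grid_point s'"
  shows "pi/2 * arcsin (2*a/(1+2*a)) \<le> atan_integral a"
proof -
  define a0 where "a0 = grid_point s"
  define a1 where "a1 = grid_point s'"
  have s: "1 < s" "0 < s'" and cert: "0 \<le> cert a0 a1 s'"
    using step by (simp_all add: grid_step_def a0_def a1_def)
  have a0: "0 < a0" using s by (simp add: a0_def grid_point_def)
  have pos: "0 < a" "0 < a1" using a0 a by (auto simp: a0_def a1_def)
  have s': "s'^2 = 1 + 4*a1" by (simp add: a1_def grid_point_def field_simps)
  have "arcsin (2*a/(1+2*a)) \<le> arcsin (2*a1/(1+2*a1))"
    using pos a by (intro arcsin_le_arcsin) (simp_all add: a1_def field_simps)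
  also have "\<dots> = arctan (2*a1/s')" by (rule arcsin_eq_arctan[OF pos(2) s(2) s'])
  finally have "pi/2 * arcsin (2*a/(1+2*a)) \<le> pi/2 * arctan (2*a1/s')" by simp
  also have "\<dots> \<le> integral_lower a0" using pos s by (intro cert_sound[OF a0 _ cert]) simp
  also have "\<dots> \<le> atan_integral a0" by (rule integral_lower_le[OF a0])
  also have "\<dots> \<le> atan_integral a" using a a0 by (intro atan_integral_mono) (simp_all add: a0_def)
  finally show ?thesis .
qed

lemma successively_cover:
  fixes g :: "'a \<Rightarrow> 'b::linorder"
  assumes "successively (\<lambda>s s'. \<forall>a. g s \<le> a \<and> a \<le> g s' \<longrightarrow> P a) (s # s' # ss)"
    and "g s \<le> a" "a \<le> g (last (s' # ss))"
  shows "P a"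
  using assms
proof (induction ss arbitrary: s s')
  case Nil thus ?case by simp
next
  case (Cons s'' ss)
  show ?case
  proof (cases "a \<le> g s'")
    case True thus ?thesis using Cons.prems by simp
  next
    case False thus ?thesis using Cons.prems by (intro Cons.IH[of s' s'']) auto
  qed
qed

text \<open>The grid, given by the values of  s = \<surd>(1+4a); it runs from  a = 17/256  to  a = 63/4.\<close>

definition grid :: "real list" where
  "grid = [9/8, 37/32, 19/16, 39/32, 5/4, 41/32, 21/16, 43/32, 89/64, 23/16, 95/64, 49/32,
           25/16, 51/32, 13/8, 53/32, 27/16, 55/32, 7/4, 57/32, 29/16, 59/32, 121/64, 31/16,
           127/64, 65/32, 133/64, 17/8, 139/64, 143/64, 147/64, 19/8, 157/64, 163/64, 85/32,
           89/32, 47/16, 201/64, 109/32, 121/32, 277/64, 331/64, 53/8, 8]"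

lemma grid_verified: "successively grid_step grid"
  unfolding grid_def successively.simps
  by (intro conjI TrueI)
     (simp_all add: grid_step_def grid_point_def cert_def atan_lo_def log_lo_def log_coeff_def
        ln_lo_def ln_up_def odd_power_sum_def Let_def eval_nat_numeral power2_eq_square)

lemma grid_range:
  fixes a :: real assumes "17/256 \<le> a" "a \<le> 63/4"
  shows "pi/2 * arcsin (2*a/(1+2*a)) \<le> atan_integral a"
proof -
  have "successively (\<lambda>s s'. \<forall>a. grid_point s \<le> a \<and> a \<le> grid_point s' \<longrightarrow>
          pi/2 * arcsin (2*a/(1+2*a)) \<le> atan_integral a) grid"
    using grid_verified by (rule successively_mono) (use grid_step_sound in blast)
  then show ?thesis unfolding grid_def
    by (rule successively_cover) (use assms in \<open>simp_all add: grid_point_def power2_eq_square\<close>)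
qed

text \<open>Small  a: the left side is at most  pi a, while the lower bound is about
  (pi/2 - 2/3) a + a ln(1/a), which is larger once  ln(1/a) \<ge> 5/2, i.e. for  a \<le> 17/256.
  The bound is most conveniently handled in the following form.\<close>

lemma integral_lower_alt:
  fixes a :: real assumes "0 < a"
  shows "integral_lower a
           = pi/2 * arctan a + log_coeff a * ln (1 + a^2) - (a + a^3/3) * ln a - a/6"
  unfolding integral_lower_def ln_one_plus_inverse_square[OF assms] log_coeff_def
  using assms by (simp add: field_simps power3_eq_cube)

lemma small_a_target_le:
  fixes a :: real assumes "0 < a"
  shows "pi/2 * arcsin (2*a/(1+2*a)) \<le> pi * a"
proof -
  define s where "s = sqrt (1 + 4*a)"
  have s: "0 < s" "s^2 = 1 + 4*a" "1 \<le> s" using assms by (simp_all add: s_def)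
  have "arcsin (2*a/(1+2*a)) = arctan (2*a/s)" by (rule arcsin_eq_arctan[OF assms s(1,2)])
  also have "\<dots> \<le> 2*a/s" using assms s by (intro arctan_le_self) simp
  also have "\<dots> \<le> 2*a" using assms s by (simp add: divide_le_eq mult_le_cancel_left1)
  finally show ?thesis by (simp add: pi_gt_zero)
qed

lemma small_a_lower:
  fixes a :: real assumes a: "0 < a" "a \<le> 17/256"
  shows "pi * a \<le> integral_lower a"
proof -
  let ?c = "log_coeff a"
  have c: "?c \<le> 0"
  proof -
    have "a^3/6 \<le> a/6" using a by (simp add: power3_eq_cube mult_le_cancel_right1 mult_le_one)
    moreover have "4 * a * a \<le> 1" using mult_mono[OF a(2) a(2)] a by simp
    hence "4 * a \<le> 1/a" using a by (simp add: field_simps)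
    moreover have "1/(2*a) = (1/a)/2" and "0 < 1/a" using a by simp_all
    ultimately show ?thesis unfolding log_coeff_def by linarith
  qed
  have "?c * a^2 \<le> ?c * ln (1 + a^2)"
    using c ln_add_one_self_le_self[of "a^2"] by (simp add: mult_left_mono_neg)
  moreover have "5/2 \<le> - ln a"
  proof -
    have "5/2 \<le> ln_lo (256/17)" by (simp add: ln_lo_def odd_power_sum_def eval_nat_numeral)
    also have "\<dots> \<le> ln (256/17)" by (rule ln_lo_ln_up(1)) simp
    also have "\<dots> \<le> ln (1/a)" using a by (subst ln_le_cancel_iff) (simp_all add: field_simps)
    finally show ?thesis using a by (simp add: ln_div)
  qed
  hence "(a + a^3/3) * (5/2) \<le> (a + a^3/3) * (- ln a)" using a by (intro mult_left_mono) auto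
  moreover have "pi/2 * (a - a^3/3) \<le> pi/2 * arctan a"
    using arctan_lower_cubic[of a] a by (intro mult_left_mono) simp_all
  moreover have "pi * a \<le> pi/2 * (a - a^3/3) + ?c * a^2 + (a + a^3/3) * (5/2) - a/6"
  proof -
    have "pi/2 * (a - a^3/3) + ?c * a^2 + (a + a^3/3) * (5/2) - a/6 - pi * a
            = a * ((11/6 - pi/2) + a^2 * (4/3 - pi/6) + a^4/6)"
      unfolding log_coeff_def using a
      by (simp add: field_simps power2_eq_square power3_eq_cube power4_eq_xxxx)
    moreover have "0 \<le> (11/6 - pi/2) + a^2 * (4/3 - pi/6) + a^4/6"
      using pi_approx(2) by simp
    hence "0 \<le> a * ((11/6 - pi/2) + a^2 * (4/3 - pi/6) + a^4/6)" using a by simp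
    ultimately show ?thesis by linarith
  qed
  ultimately show ?thesis unfolding integral_lower_alt[OF a(1)] by linarith
qed

text \<open>Large  a: with  s = \<surd>(1+4a),  u = 2a/s  and  d = (a-u)/(1+au)  one has  d \<approx> 1/u \<approx> s/(2a),
  so  pi/2 \<cdot> arctan d \<approx> pi s/(4a)  dominates the remaining terms  \<approx> (1/3 - ln a)/a.\<close>

lemma large_a_sqrt:
  fixes a :: real assumes a: "63/4 \<le> a"
  shows "8 \<le> sqrt (1 + 4*a)" and "sqrt (1 + 4*a) \<le> a"
proof -
  have "sqrt 64 \<le> sqrt (1 + 4*a)" using a by (subst real_sqrt_le_iff) simp
  thus "8 \<le> sqrt (1 + 4*a)" by (simp add: real_sqrt_unique)
  have "15 * 1 \<le> a * (a - 4)" using a by (intro mult_mono) auto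
  hence "1 + 4*a \<le> a^2" by (simp add: algebra_simps power2_eq_square)
  from real_sqrt_le_mono[OF this] show "sqrt (1 + 4*a) \<le> a" using a by simp
qed

lemma large_a_diff_bounds:
  fixes a s :: real assumes a: "63/4 \<le> a" and s: "s = sqrt (1 + 4*a)"
  defines "d \<equiv> (a - 2*a/s) / (1 + a*(2*a/s))"
  shows "0 \<le> d" and "d \<le> 8/31" and "9/25 * s \<le> a * d"
proof -
  define u where "u = 2*a/s"
  have d_u: "d = (a - u) / (1 + a*u)" by (simp only: d_def u_def)
  have s8: "8 \<le> s" and s_le: "s \<le> a" using large_a_sqrt[OF a] by (simp_all add: s)
  have s2: "s^2 = 1 + 4*a" using a by (simp add: s)
  have us: "u * s = 2*a" and u0: "0 < u" using s8 a by (simp_all add: u_def)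
  have "8 * 1 \<le> s * (4 * s - 31)" using s8 by (intro mult_mono) auto
  hence "31/8 * s \<le> u * s" using us s2 by (simp add: algebra_simps power2_eq_square)
  hence u_lo: "31/8 \<le> u" using s8 by simp
  have "u * 8 \<le> u * s" using s8 u0 by (intro mult_left_mono) auto
  hence u_up: "u \<le> a/4" using us by linarith
  have den: "0 < 1 + a*u" using a u0 by (simp add: add_pos_pos)
  show "0 \<le> d" using u_up a den by (simp add: d_u)
  have "d \<le> 1/u" using a u0 den by (simp add: d_u field_simps)
  also have "\<dots> \<le> 8/31" using u_lo by (simp add: field_simps)
  finally show "d \<le> 8/31" .
  have "12 * s \<le> a * a" using s_le a s8 by (intro mult_mono) auto
  moreover have "s * (a*u) = 2*a*a" using us by (simp add: algebra_simps)
  moreover have "a*u \<le> a*(a/4)" using u_up a by (simp add: mult_left_mono)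
  moreover have "9/25 * s * (1 + a*u) = 9/25 * s + 9/25 * (s * (a*u))"
    and "a * (a - u) = a*a - a*u" by (simp_all add: algebra_simps)
  ultimately have "9/25 * s * (1 + a*u) \<le> a * (a - u)" by linarith
  thus "9/25 * s \<le> a * d" using den by (simp add: d_u field_simps)
qed

lemma large_a_arctan_part:
  fixes a s :: real assumes a: "63/4 \<le> a" and s: "s = sqrt (1 + 4*a)"
  defines "d \<equiv> (a - 2*a/s) / (1 + a*(2*a/s))"
  shows "21/40 * s \<le> pi/2 * (a * arctan d)"
proof -
  note d = large_a_diff_bounds[OF a s, folded d_def]
  have "d^2 \<le> (8/31)^2" by (rule power_mono) (use d in auto)
  hence "2819/2883 \<le> 1 - d^2/3" by (simp add: power_divide)
  hence "d * (2819/2883) \<le> d * (1 - d^2/3)" using d(1) by (rule mult_left_mono)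
  also have "\<dots> \<le> arctan d"
    using arctan_lower_cubic[OF d(1)] by (simp add: algebra_simps power2_eq_square power3_eq_cube)
  finally have "a * (d * (2819/2883)) \<le> a * arctan d" using a by (simp add: mult_left_mono)
  moreover have "a * (d * (2819/2883)) = 2819/2883 * (a * d)" by simp
  moreover have "0 \<le> s" using a by (simp add: s)
  ultimately have "7/20 * s \<le> a * arctan d" using d(3) by linarith
  moreover have "3/2 * (a * arctan d) \<le> pi/2 * (a * arctan d)"
    using pi_gt3 a d(1) by (intro mult_right_mono) simp_all
  ultimately show ?thesis by linarith
qed

lemma large_a_log_part:
  fixes a :: real assumes a: "63/4 \<le> a"
  shows "3/10 \<le> a * log_coeff a * ln (1 + 1/a^2) - a^2/6"
proof -
  define x where "x = 1/a^2"
  have "(63/4)^2 \<le> a^2" using a by (intro power_mono) auto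
  hence x: "0 \<le> x" "x \<le> 16/3969" using a by (simp_all add: x_def field_simps)
  have "a * log_coeff a * (x - x^2) \<le> a * log_coeff a * ln (1 + x)"
    using ln_one_plus_pos_lower_bound[of x] x log_coeff_nonneg[of a] a
    by (intro mult_left_mono) auto
  moreover have "a * log_coeff a * (x - x^2) - a^2/6 = 1/3 - x + x^2/2"
    unfolding log_coeff_def x_def using a
    by (simp add: field_simps power2_eq_square power3_eq_cube power4_eq_xxxx)
  moreover have "3/10 \<le> 1/3 - x + x^2/2" using x zero_le_power2[of x] by linarith
  ultimately show ?thesis by (simp add: x_def)
qed

lemma large_a_ln:
  fixes a :: real assumes a: "63/4 \<le> a"
  shows "ln a \<le> 774/1000 + sqrt (1 + 4*a) / 4"
proof -
  define r where "r = sqrt a"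
  have r: "0 < r" "r^2 = a" using a by (simp_all add: r_def)
  have "ln (4::real) \<le> ln_up 4" by (rule ln_lo_ln_up(2)) simp
  also have "\<dots> \<le> 1387/1000"
    by (simp add: ln_up_def ln_lo_def odd_power_sum_def eval_nat_numeral)
  finally have ln4: "ln (4::real) \<le> 1387/1000" .
  have "ln a = 2 * (ln 4 + ln (r/4))" using ln_realpow[of r 2] r by (simp add: ln_div)
  moreover have "ln (r/4) \<le> r/4 - 1" using r by (intro ln_le_minus_one) simp
  moreover have "r \<le> sqrt ((1 + 4*a) / 4)" unfolding r_def by (rule real_sqrt_le_mono) simp
  moreover have "sqrt ((1 + 4*a) / 4) = sqrt (1 + 4*a) / 2" by (simp add: real_sqrt_divide)
  ultimately show ?thesis using ln4 by argo
qed

lemma large_a_lower: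
  fixes a :: real assumes a: "63/4 \<le> a"
  shows "pi/2 * arctan (2*a / sqrt (1 + 4*a)) \<le> integral_lower a"
proof -
  define s where "s = sqrt (1 + 4*a)"
  define d where "d = (a - 2*a/s) / (1 + a*(2*a/s))"
  have a0: "0 < a" and s8: "8 \<le> s" using a large_a_sqrt(1)[OF a] by (simp_all add: s_def)
  have "integral_lower a - pi/2 * arctan (2*a/s)
          = pi/2 * arctan d + log_coeff a * ln (1 + 1/a^2) - ln a / a - a/6"
    unfolding integral_lower_def d_def using arctan_diff[OF a0, of "2*a/s"] a0 s8
    by (simp add: algebra_simps)
  hence "a * (integral_lower a - pi/2 * arctan (2*a/s))
          = pi/2 * (a * arctan d) + (a * log_coeff a * ln (1 + 1/a^2) - a^2/6) - ln a"
    using a0 by (simp add: field_simps power2_eq_square)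
  hence "0 \<le> a * (integral_lower a - pi/2 * arctan (2*a/s))"
    using large_a_arctan_part[OF a s_def] large_a_log_part[OF a] large_a_ln[OF a] s8
    unfolding d_def s_def by linarith
  thus ?thesis using a0 by (simp add: zero_le_mult_iff s_def)
qed

lemma arcsin_le_atan_integral:
  fixes a :: real assumes a: "0 < a"
  shows "pi/2 * arcsin (2*a/(1+2*a)) \<le> atan_integral a"
proof -
  consider "a \<le> 17/256" | "17/256 \<le> a" "a \<le> 63/4" | "63/4 \<le> a" by linarith
  then show ?thesis
  proof cases
    case 1
    then show ?thesis using small_a_target_le[OF a] small_a_lower[OF a] integral_lower_le[OF a]
      by linarith
  next
    case 2
    then show ?thesis by (rule grid_range)
  next
    case 3
    have "arcsin (2*a/(1+2*a)) = arctan (2*a / sqrt (1 + 4*a))"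
      using a by (intro arcsin_eq_arctan) simp_all
    then show ?thesis using large_a_lower[OF 3] integral_lower_le[OF a] by simp
  qed
qed

lemma P_chi_difference:
  fixes z :: real assumes z: "0 < z" "z < 1"
  defines "a \<equiv> z / (2 - 2*z)"
  shows "P_chi1 z - P_chi2 z = 2/pi^2 * (atan_integral a - pi/2 * arcsin (2*a/(1+2*a)))"
proof -
  have za: "2*a/(1+2*a) = z" using z by (simp add: a_def field_simps)
  have arccos_z: "arccos z = pi/2 - arcsin z" using z by (intro arccos_arcsin_eq) auto
  show ?thesis using z unfolding za unfolding P_chi1_def P_chi2_def atan_integral_def a_def
    by (simp add: arccos_z field_simps power2_eq_square)
qed

theorem lemma4:
  fixes z :: real
  assumes "0 \<le> z" and "z \<le> 1"
  shows "P_chi2 z \<le> P_chi1 z"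
proof -
  consider "z = 0" | "z = 1" | "0 < z" "z < 1" using assms by linarith
  then show ?thesis
  proof cases
    case 3
    define a where "a = z / (2 - 2*z)"
    have "0 < a" using 3 by (simp add: a_def)
    hence "0 \<le> atan_integral a - pi/2 * arcsin (2*a/(1+2*a))"
      using arcsin_le_atan_integral by simp
    hence "0 \<le> P_chi1 z - P_chi2 z" unfolding P_chi_difference[OF 3, folded a_def] by simp
    then show ?thesis by simp
  qed (simp_all add: P_chi1_def P_chi2_def)
qed

end
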